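(* Let $K$ be a subgroup of $\mathrm{Spin}_8\subset\mathrm{Spin}_{10,1}$ and let $N$ be a subgroup of the null-rotation group $\{\mathbb{1}+\sum_\mu c_\mu\Sigma_{+\mu}: c\in\mathbb{R}^9\}$ containing a non-identity element; let $G$ be the subgroup generated by $K$ and $N$. For a subgroup $H$ write $\Delta^H$ for the $H$-invariant spinors, and set $\Delta^K_\pm=\Delta^K\cap\ker\Gamma_\pm$. Then: (i) $\Delta^K=\Delta^K_+\oplus\Delta^K_-$, $\Gamma_\pm$ restricts to an isomorphism $\Delta^K_\mp\to\Delta^K_\pm$, and $\dim\Delta^K_+=\dim\Delta^K_-=\tfrac12\dim\Delta^K$; $\dim\Delta^K$ is even; (ii) $\Delta^G=\Delta^K_+$, so $\dim\Delta^G=\tfrac12\dim\Delta^K$; (iii) if $\pi$ is a unit simple $(5,1)$-vector whose plane contains $e_0$ and $e_9$, and $\Delta(\pm\pi)=\{\varepsilon:\pi\cdot\varepsilon=\pm\varepsilon\}$, then $\Gamma_+$ maps $\Delta^K_-\cap\Delta(\pi)$ isomorphically onto $\Delta^K_+\cap\Delta(-\pi)$ and $\Delta^K_-\cap\Delta(-\pi)$ isomorphically onto $\Delta^K_+\cap\Delta(\pi)$; in particular $\dim(\Delta(\pi)\cap\Delta^G)\le\tfrac12\dim\Delta^K$.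
   Context: Let $\mathbb{M}^{10,1}$ be $\mathbb{R}^{11}$ with orthonormal basis $e_0,e_1,\dots,e_9,e_\natural$ and Lorentzian metric $\eta$ with $\eta(e_0,e_0)=-1$ and $\eta(e_M,e_M)=+1$ for $M\neq 0$. The Clifford algebra $\mathrm{C}\ell_{1,10}$ is generated by $\Gamma_M$, $M\in\{0,1,\dots,9,\natural\}$, with $\Gamma_M\Gamma_N+\Gamma_N\Gamma_M=2\eta_{MN}\mathbb{1}$; simple multivectors of orthogonal vectors act by Clifford products. $\Delta$ denotes the $32$-dimensional real irreducible representation of $\mathrm{C}\ell_{1,10}$ on which $\Gamma_0\Gamma_1\cdots\Gamma_9\Gamma_\natural=-\mathbb{1}$. $\Sigma_{MN}=-\tfrac12\Gamma_M\Gamma_N$; $\mathrm{Spin}_8$ is the connected subgroup of $\mathrm{Spin}_{10,1}$ with Lie algebra spanned by $\Sigma_{ij}$, $1\le i<j\le 8$. $\Gamma_\pm=\Gamma_0\pm\Gamma_9$ and $\Sigma_{+\mu}=-\tfrac12\Gamma_+\Gamma_\mu$ for $\mu\in\{1,\dots,8,\natural\}$. *)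

theory Defs
  imports "HOL-Analysis.Analysis"
begin

text \<open>Spinor endomorphisms: real 32x32 matrices acting on Delta = real^32.
  Indices of M^{10,1}: 0,1,...,9 and 10 standing for the index natural.\<close>

type_synonym smat = "real^32^32"
type_synonym spinor = "real^32"

definition eta :: "nat \<Rightarrow> nat \<Rightarrow> real" where
  "eta M N = (if M = N then (if M = 0 then -1 else 1) else 0)"

definition mprod :: "(nat \<Rightarrow> smat) \<Rightarrow> nat list \<Rightarrow> smat" where
  "mprod f xs = foldr (\<lambda>M A. f M ** A) xs (mat 1)"

text \<open>Gamma is a real representation of Cl(1,10) on real^32 with
  Gamma_0 Gamma_1 ... Gamma_9 Gamma_natural = -1 (this is Delta).\<close>
definition clifford_rep :: "(nat \<Rightarrow> smat) \<Rightarrow> bool" where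
  "clifford_rep \<Gamma> \<longleftrightarrow>
     (\<forall>M\<le>10. \<forall>N\<le>10. \<Gamma> M ** \<Gamma> N + \<Gamma> N ** \<Gamma> M = (2 * eta M N) *\<^sub>R mat 1)
     \<and> mprod \<Gamma> [0..<11] = - mat 1"

definition Sigma :: "(nat \<Rightarrow> smat) \<Rightarrow> nat \<Rightarrow> nat \<Rightarrow> smat" where
  "Sigma \<Gamma> M N = (-1/2) *\<^sub>R (\<Gamma> M ** \<Gamma> N)"

definition Gplus :: "(nat \<Rightarrow> smat) \<Rightarrow> smat" where
  "Gplus \<Gamma> = \<Gamma> 0 + \<Gamma> 9"

definition Gminus :: "(nat \<Rightarrow> smat) \<Rightarrow> smat" where
  "Gminus \<Gamma> = \<Gamma> 0 - \<Gamma> 9"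

definition Sigma_plus :: "(nat \<Rightarrow> smat) \<Rightarrow> nat \<Rightarrow> smat" where
  "Sigma_plus \<Gamma> \<mu> = (-1/2) *\<^sub>R (Gplus \<Gamma> ** \<Gamma> \<mu>)"

definition transverse :: "nat set" where
  "transverse = {1..8} \<union> {10}"

fun mpow :: "smat \<Rightarrow> nat \<Rightarrow> smat" where
  "mpow X 0 = mat 1"
| "mpow X (Suc n) = X ** mpow X n"

definition mexp :: "smat \<Rightarrow> smat" where
  "mexp X = (\<Sum>n. (1 / fact n) *\<^sub>R mpow X n)"

definition matgroup :: "smat set \<Rightarrow> bool" where
  "matgroup H \<longleftrightarrow> mat 1 \<in> H \<and> (\<forall>x\<in>H. \<forall>y\<in>H. x ** y \<in> H)
     \<and> (\<forall>x\<in>H. invertible x \<and> matrix_inv x \<in> H)"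

definition gen_group :: "smat set \<Rightarrow> smat set" where
  "gen_group A = \<Inter>{H. matgroup H \<and> A \<subseteq> H}"

text \<open>Spin_8: the connected subgroup whose Lie algebra is spanned by
  Sigma_ij, 1 <= i < j <= 8, i.e. the group generated by exp of its Lie algebra.\<close>
definition spin8_lie :: "(nat \<Rightarrow> smat) \<Rightarrow> smat set" where
  "spin8_lie \<Gamma> = span {Sigma \<Gamma> i j | i j. 1 \<le> i \<and> i < j \<and> j \<le> 8}"

definition Spin8 :: "(nat \<Rightarrow> smat) \<Rightarrow> smat set" where
  "Spin8 \<Gamma> = gen_group (mexp ` spin8_lie \<Gamma>)"

definition null_rot :: "(nat \<Rightarrow> smat) \<Rightarrow> smat set" where
  "null_rot \<Gamma> = {mat 1 + (\<Sum>\<mu>\<in>transverse. c \<mu> *\<^sub>R Sigma_plus \<Gamma> \<mu>) | c. True}"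

definition invariants :: "smat set \<Rightarrow> spinor set" where
  "invariants H = {\<epsilon>. \<forall>h\<in>H. h *v \<epsilon> = \<epsilon>}"

definition mker :: "smat \<Rightarrow> spinor set" where
  "mker A = {\<epsilon>. A *v \<epsilon> = 0}"

definition direct_sum :: "spinor set \<Rightarrow> spinor set \<Rightarrow> spinor set \<Rightarrow> bool" where
  "direct_sum V A B \<longleftrightarrow> V = {a + b | a b. a \<in> A \<and> b \<in> B} \<and> A \<inter> B = {0}"

text \<open>Vectors of M^{10,1} as functions on indices 0..10 (10 = natural).\<close>
definition minner :: "(nat \<Rightarrow> real) \<Rightarrow> (nat \<Rightarrow> real) \<Rightarrow> real" where
  "minner v w = (\<Sum>M\<le>10. eta M M * v M * w M)"

definition Gvec :: "(nat \<Rightarrow> smat) \<Rightarrow> (nat \<Rightarrow> real) \<Rightarrow> smat" where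
  "Gvec \<Gamma> v = (\<Sum>M\<le>10. v M *\<^sub>R \<Gamma> M)"

definition basis_vec :: "nat \<Rightarrow> nat \<Rightarrow> real" where
  "basis_vec K = (\<lambda>M. if M = K then 1 else 0)"

text \<open>w 0,...,w 5 are pairwise orthogonal vectors spanning a (5,1)-plane
  (one timelike, five spacelike), the simple 6-vector w0 ^ ... ^ w5 is unit,
  and its plane contains e_0 and e_9.\<close>
definition unit_simple_51_e09 :: "(nat \<Rightarrow> nat \<Rightarrow> real) \<Rightarrow> bool" where
  "unit_simple_51_e09 w \<longleftrightarrow>
     (\<forall>i<6. \<forall>j<6. i \<noteq> j \<longrightarrow> minner (w i) (w j) = 0)
     \<and> card {i. i < 6 \<and> minner (w i) (w i) < 0} = 1
     \<and> card {i. i < 6 \<and> minner (w i) (w i) > 0} = 5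
     \<and> \<bar>\<Prod>i<6. minner (w i) (w i)\<bar> = 1
     \<and> (\<exists>a. \<forall>M\<le>10. basis_vec 0 M = (\<Sum>i<6. a i * w i M))
     \<and> (\<exists>a. \<forall>M\<le>10. basis_vec 9 M = (\<Sum>i<6. a i * w i M))"

definition multivec_action :: "(nat \<Rightarrow> smat) \<Rightarrow> (nat \<Rightarrow> nat \<Rightarrow> real) \<Rightarrow> smat" where
  "multivec_action \<Gamma> w = foldr (\<lambda>i A. Gvec \<Gamma> (w i) ** A) [0..<6] (mat 1)"

definition eig :: "smat \<Rightarrow> real \<Rightarrow> spinor set" where
  "eig P s = {\<epsilon>. P *v \<epsilon> = s *\<^sub>R \<epsilon>}"

end

theory Submission
  imports Defs
begin

text \<open>
  The matrices \<open>Gplus = \<Gamma> 0 + \<Gamma> 9\<close> and \<open>Gminus = \<Gamma> 0 - \<Gamma> 9\<close> square to zero and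
  anticommute to \<open>-4\<close>, and they commute with \<open>Spin8\<close>, whose Lie algebra only involves
  \<open>\<Gamma> 1, ..., \<Gamma> 8\<close>. Hence on the \<open>K\<close>-invariant spinors the identity
  \<open>4 \<epsilon> = - Gplus (Gminus \<epsilon>) - Gminus (Gplus \<epsilon>)\<close> splits off the two kernels as
  complementary summands, with \<open>Gplus\<close> and \<open>-Gminus/4\<close> mutually inverse between them.
  A null rotation is \<open>1 - Gplus V / 2\<close> with \<open>V = \<Sigma> c\<^sub>\<mu> \<Gamma> \<mu>\<close> anticommuting with
  \<open>Gplus\<close> and \<open>V\<^sup>2 = |c|\<^sup>2\<close>; so it fixes \<open>\<epsilon>\<close> iff \<open>V (Gplus \<epsilon>) = 0\<close>, which for
  \<open>c \<noteq> 0\<close> means \<open>Gplus \<epsilon> = 0\<close>. The simple 6-vector \<open>\<pi>\<close> anticommutes with every vector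
  of its plane (it commutes with one factor and anticommutes with the other five), in particular
  with \<open>Gplus\<close> and \<open>Gminus\<close>, so \<open>Gplus\<close> exchanges its \<open>\<plusminus>1\<close>-eigenspaces.
\<close>

section \<open>Matrix products and the matrix exponential\<close>

lemma bilinear_matrix_matrix_mult:
  "bilinear ((**) :: real^'n^'m \<Rightarrow> real^'p^'n \<Rightarrow> real^'p^'m)"
  unfolding bilinear_def
  by (auto intro!: linearI simp: matrix_add_ldistrib scalar_matrix_assoc matrix_scalar_ac)
     (vector matrix_matrix_mult_def sum.distrib field_simps)

interpretation matrix_mult: bounded_bilinear "(**) :: real^'n^'m \<Rightarrow> real^'p^'n \<Rightarrow> real^'p^'m"
  using bilinear_matrix_matrix_mult by (simp only: bilinear_conv_bounded_bilinear)

interpretation matrix_vector_mult: bounded_bilinear "(*v) :: real^'n^'m \<Rightarrow> real^'n \<Rightarrow> real^'m"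
proof -
  have "bilinear ((*v) :: real^'n^'m \<Rightarrow> real^'n \<Rightarrow> real^'m)"
    unfolding bilinear_def
    by (auto intro!: linearI simp: matrix_vector_mult_add_rdistrib scaleR_matrix_vector_assoc)
  then show "bounded_bilinear ((*v) :: real^'n^'m \<Rightarrow> real^'n \<Rightarrow> real^'m)"
    by (simp only: bilinear_conv_bounded_bilinear)
qed

lemma sums_matrixI:
  fixes f :: "nat \<Rightarrow> real^'n^'m"
  assumes "\<And>i j. (\<lambda>k. f k $ i $ j) sums (s $ i $ j)"
  shows "f sums s"
  unfolding sums_def
proof (intro vec_tendstoI)
  fix i j
  show "(\<lambda>n. sum f {..<n} $ i $ j) \<longlonglongrightarrow> s $ i $ j"
    using assms[of i j] by (simp add: sums_def)
qed

lemma norm_matrix_entry_le: "\<bar>A $ i $ j\<bar> \<le> norm (A :: real^'n^'m)"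
  using order_trans[OF component_le_norm_cart Finite_Cartesian_Product.norm_nth_le] .

lemma matrix_Cauchy_product_sums:
  fixes a :: "nat \<Rightarrow> real^'n^'m" and b :: "nat \<Rightarrow> real^'p^'n"
  assumes a: "summable (\<lambda>k. norm (a k))" and b: "summable (\<lambda>k. norm (b k))"
  shows "(\<lambda>k. \<Sum>i\<le>k. a i ** b (k - i)) sums (suminf a ** suminf b)"
proof (rule sums_matrixI)
  have entry_sums: "(\<lambda>k. f k $ i $ j) sums (suminf f $ i $ j)"
    and entry_summable: "summable (\<lambda>k. norm (f k $ i $ j))"
    if "summable (\<lambda>k. norm (f k))" for f :: "nat \<Rightarrow> real^'q^'r" and i j
  proof -
    show "(\<lambda>k. f k $ i $ j) sums (suminf f $ i $ j)"
      using sums_vec_nth[OF sums_vec_nth[OF summable_sums[OF summable_norm_cancel[OF that]]]] .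
    show "summable (\<lambda>k. norm (f k $ i $ j))"
      using that by (rule summable_comparison_test'[where N = 0]) (simp add: norm_matrix_entry_le)
  qed
  fix i j
  have "(\<lambda>k. \<Sum>r\<le>k. a r $ i $ l * b (k - r) $ l $ j) sums (suminf a $ i $ l * suminf b $ l $ j)" for l
    using Cauchy_product_sums[OF entry_summable[OF a] entry_summable[OF b]]
    by (simp add: sums_unique[OF entry_sums[OF a]] sums_unique[OF entry_sums[OF b]])
  then have "(\<lambda>k. \<Sum>l\<in>UNIV. \<Sum>r\<le>k. a r $ i $ l * b (k - r) $ l $ j)
      sums (\<Sum>l\<in>UNIV. suminf a $ i $ l * suminf b $ l $ j)"
    by (rule sums_sum)
  then show "(\<lambda>k. (\<Sum>r\<le>k. a r ** b (k - r)) $ i $ j) sums ((suminf a ** suminf b) $ i $ j)"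
    by (simp add: matrix_matrix_mult_def sum.swap[where B = UNIV])
qed

lemma summable_norm_mexp_series: "summable (\<lambda>n. norm ((1 / fact n) *\<^sub>R mpow X n))"
proof -
  obtain K where K: "K > 0" "\<And>A B. norm ((A :: smat) ** (B :: smat)) \<le> norm A * norm B * K"
    using matrix_mult.pos_bounded by blast
  have mpow_le: "norm (mpow X n) \<le> norm (mat 1 :: smat) * (norm X * K) ^ n" for n
  proof (induction n)
    case (Suc n)
    have "norm (mpow X (Suc n)) \<le> norm X * K * norm (mpow X n)"
      using K(2)[of X "mpow X n"] by (simp add: mult_ac)
    also have "\<dots> \<le> norm X * K * (norm (mat 1 :: smat) * (norm X * K) ^ n)"
      using Suc K(1) by (intro mult_left_mono) auto
    finally show ?case by (simp add: mult_ac)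
  qed simp
  show ?thesis
  proof (rule summable_comparison_test'[where N = 0])
    show "summable (\<lambda>n. norm (mat 1 :: smat) * (inverse (fact n) * (norm X * K) ^ n))"
      by (intro summable_mult summable_exp)
    show "norm (norm ((1 / fact n) *\<^sub>R mpow X n))
        \<le> norm (mat 1 :: smat) * (inverse (fact n) * (norm X * K) ^ n)" for n
      using mpow_le[of n] by (simp add: divide_inverse mult_left_mono mult.left_commute)
  qed
qed

lemma mpow_commute:
  assumes "A ** X = X ** A"
  shows "A ** mpow X n = mpow X n ** A"
proof (induction n)
  case (Suc n)
  have "A ** mpow X (Suc n) = (X ** A) ** mpow X n"
    by (simp add: matrix_mul_assoc assms)
  also have "\<dots> = X ** (mpow X n ** A)"
    by (simp add: Suc.IH flip: matrix_mul_assoc)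
  finally show ?case
    by (simp add: matrix_mul_assoc)
qed simp

lemma mexp_commute:
  assumes "A ** X = X ** A"
  shows "A ** mexp X = mexp X ** A"
proof -
  have summable: "summable (\<lambda>n. (1 / fact n) *\<^sub>R mpow X n)"
    using summable_norm_cancel[OF summable_norm_mexp_series] .
  have "A ** mexp X = (\<Sum>n. A ** ((1 / fact n) *\<^sub>R mpow X n))"
    unfolding mexp_def by (rule bounded_linear.suminf[OF matrix_mult.bounded_linear_right summable])
  also have "\<dots> = (\<Sum>n. ((1 / fact n) *\<^sub>R mpow X n) ** A)"
    by (simp add: matrix_mult.scaleR_left matrix_mult.scaleR_right mpow_commute[OF assms])
  also have "\<dots> = mexp X ** A"
    unfolding mexp_def by (rule bounded_linear.suminf[OF matrix_mult.bounded_linear_left summable, symmetric])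
  finally show ?thesis .
qed

lemma mpow_add: "mpow X (m + n) = mpow X m ** mpow X n"
  by (induction m) (auto simp: matrix_mul_assoc)

lemma mpow_uminus: "mpow (- X) n = (-1) ^ n *\<^sub>R mpow X n"
  by (induction n) (simp_all add: matrix_mult.minus_left matrix_mult.scaleR_right)

lemma mexp_mult_mexp_uminus: "mexp X ** mexp (- X) = mat 1"
proof -
  have "(\<lambda>k. \<Sum>i\<le>k. ((1 / fact i) *\<^sub>R mpow X i) ** ((1 / fact (k - i)) *\<^sub>R mpow (- X) (k - i)))
      sums (mexp X ** mexp (- X))"
    unfolding mexp_def
    by (rule matrix_Cauchy_product_sums[OF summable_norm_mexp_series summable_norm_mexp_series])
  moreover have "(\<Sum>i\<le>k. ((1 / fact i) *\<^sub>R mpow X i) ** ((1 / fact (k - i)) *\<^sub>R mpow (- X) (k - i)))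
      = (if k = 0 then mat 1 else 0)" for k
  proof -
    have "(\<Sum>i\<le>k. ((1 / fact i) *\<^sub>R mpow X i) ** ((1 / fact (k - i)) *\<^sub>R mpow (- X) (k - i)))
        = ((\<Sum>i\<le>k. real (k choose i) * 1 ^ i * (-1) ^ (k - i)) / fact k) *\<^sub>R mpow X k"
      by (simp add: mpow_uminus matrix_mult.scaleR_left matrix_mult.scaleR_right
          mpow_add[symmetric] scaleR_sum_left sum_divide_distrib binomial_fact mult.commute)
    also have "\<dots> = ((1 + (-1)) ^ k / fact k) *\<^sub>R mpow X k"
      by (simp only: binomial_ring)
    finally show ?thesis by simp
  qed
  ultimately have "(\<lambda>k. if k = 0 then mat 1 else 0) sums (mexp X ** mexp (- X))"
    by simp
  then show ?thesis
    using sums_single[of 0 "\<lambda>_. mat 1 :: smat"] sums_unique2 by fastforce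
qed

lemma invertible_mexp: "invertible (mexp X)"
  unfolding invertible_def using mexp_mult_mexp_uminus[of X] mexp_mult_mexp_uminus[of "- X"] by auto

lemma matrix_inv_right: "invertible A \<Longrightarrow> A ** matrix_inv A = mat 1"
  and matrix_inv_left: "invertible A \<Longrightarrow> matrix_inv A ** A = mat 1"
  unfolding invertible_def matrix_inv_def by (metis (mono_tags, lifting) someI_ex)+

lemma invertible_matrix_inv: "invertible A \<Longrightarrow> invertible (matrix_inv A)"
  using matrix_inv_left matrix_inv_right invertible_def by blast

lemma invertible_mat_1: "invertible (mat 1 :: 'a::semiring_1^'n^'n)"
  unfolding invertible_def by (intro exI[of _ "mat 1"]) simp

definition centralizer :: "smat set \<Rightarrow> smat set" where
  "centralizer S = {h. invertible h \<and> (\<forall>A\<in>S. h ** A = A ** h)}"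

lemma matgroup_centralizer: "matgroup (centralizer S)"
  unfolding matgroup_def
proof (intro conjI ballI)
  show "mat 1 \<in> centralizer S"
    by (simp add: centralizer_def invertible_mat_1)
next
  fix g h assume "g \<in> centralizer S" "h \<in> centralizer S"
  then show "g ** h \<in> centralizer S"
    unfolding centralizer_def by (auto intro: invertible_mult simp: matrix_mul_assoc)
      (metis matrix_mul_assoc)
next
  fix h assume h: "h \<in> centralizer S"
  then show "invertible h"
    by (simp add: centralizer_def)
  have "matrix_inv h ** A = A ** matrix_inv h" if "A \<in> S" for A
  proof -
    have "matrix_inv h ** A = matrix_inv h ** (A ** h) ** matrix_inv h"
      using matrix_inv_right[OF \<open>invertible h\<close>] by (simp flip: matrix_mul_assoc)
    also have "\<dots> = matrix_inv h ** (h ** A) ** matrix_inv h"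
      using h that by (simp add: centralizer_def)
    also have "\<dots> = A ** matrix_inv h"
      using matrix_inv_left[OF \<open>invertible h\<close>] by (simp add: matrix_mul_assoc)
    finally show ?thesis .
  qed
  then show "matrix_inv h \<in> centralizer S"
    using \<open>invertible h\<close> by (simp add: centralizer_def invertible_matrix_inv)
qed

lemma matgroup_stabilizer: "matgroup {h. invertible h \<and> h *v e = e}"
  unfolding matgroup_def
proof (intro conjI ballI)
  fix h assume h: "h \<in> {h. invertible h \<and> h *v e = e}"
  then have "matrix_inv h *v e = matrix_inv h *v (h *v e)"
    by simp
  then show "matrix_inv h \<in> {h. invertible h \<and> h *v e = e}"
    using h by (simp add: matrix_vector_mul_assoc matrix_inv_left invertible_matrix_inv)
qed (auto simp: invertible_mat_1 invertible_mult simp flip: matrix_vector_mul_assoc)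

lemma invariants_gen_group:
  assumes "\<forall>h\<in>A. invertible h"
  shows "invariants (gen_group A) = invariants A"
proof
  show "invariants (gen_group A) \<subseteq> invariants A"
    unfolding invariants_def gen_group_def by blast
  show "invariants A \<subseteq> invariants (gen_group A)"
  proof
    fix e assume "e \<in> invariants A"
    with assms have "A \<subseteq> {h. invertible h \<and> h *v e = e}"
      by (auto simp: invariants_def)
    then have "gen_group A \<subseteq> {h. invertible h \<and> h *v e = e}"
      using matgroup_stabilizer unfolding gen_group_def by blast
    then show "e \<in> invariants (gen_group A)"
      by (auto simp: invariants_def)
  qed
qed

lemma invariants_Un: "invariants (A \<union> B) = invariants A \<inter> invariants B"
  unfolding invariants_def by blast

lemma subspace_invariants: "subspace (invariants H)"
  unfolding subspace_def invariants_def by (simp add: matrix_vector_right_distrib matrix_vector_mult_scaleR)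

lemma invariants_closed_centralizer:
  assumes "H \<subseteq> centralizer S" "A \<in> S" "x \<in> invariants H"
  shows "A *v x \<in> invariants H"
  unfolding invariants_def
proof (intro CollectI ballI)
  fix h assume "h \<in> H"
  with assms(1,2) have "h ** A = A ** h"
    by (auto simp: centralizer_def)
  then have "h *v (A *v x) = A *v (h *v x)"
    by (simp add: matrix_vector_mul_assoc)
  with \<open>h \<in> H\<close> assms(3) show "h *v (A *v x) = A *v x"
    by (simp add: invariants_def)
qed

lemma subspace_mker: "subspace (mker A)"
  unfolding subspace_def mker_def by (simp add: matrix_vector_right_distrib matrix_vector_mult_scaleR)

section \<open>Clifford relations\<close>

lemma clifford_rep_anticomm:
  assumes "clifford_rep \<Gamma>" "M \<le> 10" "N \<le> 10"
  shows "\<Gamma> M ** \<Gamma> N + \<Gamma> N ** \<Gamma> M = (2 * eta M N) *\<^sub>R mat 1"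
  using assms unfolding clifford_rep_def by blast

lemma clifford_rep_anticomm_distinct:
  assumes "clifford_rep \<Gamma>" "M \<le> 10" "N \<le> 10" "M \<noteq> N"
  shows "\<Gamma> M ** \<Gamma> N = - (\<Gamma> N ** \<Gamma> M)"
  using clifford_rep_anticomm[OF assms(1-3)] assms(4) by (simp add: eta_def eq_neg_iff_add_eq_0)

lemma add_self_eq_scaleR_double_iff:
  fixes x y :: "'a::real_vector"
  shows "x + x = (2 * c) *\<^sub>R y \<longleftrightarrow> x = c *\<^sub>R y"
  by (metis scaleR_2 scaleR_cancel_left scaleR_scaleR zero_neq_numeral)

lemma clifford_rep_square:
  assumes "clifford_rep \<Gamma>" "M \<le> 10"
  shows "\<Gamma> M ** \<Gamma> M = eta M M *\<^sub>R mat 1"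
  using clifford_rep_anticomm[OF assms(1,2,2)] by (simp only: add_self_eq_scaleR_double_iff)

lemma Gplus_square: "clifford_rep \<Gamma> \<Longrightarrow> Gplus \<Gamma> ** Gplus \<Gamma> = 0"
  and Gminus_square: "clifford_rep \<Gamma> \<Longrightarrow> Gminus \<Gamma> ** Gminus \<Gamma> = 0"
  and Gplus_Gminus_anticomm:
    "clifford_rep \<Gamma> \<Longrightarrow> Gplus \<Gamma> ** Gminus \<Gamma> + Gminus \<Gamma> ** Gplus \<Gamma> = (-4) *\<^sub>R mat 1"
  using clifford_rep_square[of \<Gamma> 0] clifford_rep_square[of \<Gamma> 9]
    clifford_rep_anticomm_distinct[of \<Gamma> 0 9]
  by (simp_all add: Gplus_def Gminus_def eta_def matrix_mult.add_left matrix_mult.add_right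
      matrix_mult.diff_left matrix_mult.diff_right)
     (simp add: vec_eq_iff mat_def)

lemma Gvec_mult:
  "Gvec \<Gamma> v ** Gvec \<Gamma> w = (\<Sum>M\<le>10. \<Sum>N\<le>10. (v M * w N) *\<^sub>R (\<Gamma> M ** \<Gamma> N))"
  unfolding Gvec_def matrix_mult.sum_left matrix_mult.sum_right matrix_mult.scaleR_left
    matrix_mult.scaleR_right scaleR_scaleR
  by (subst sum.swap) (simp add: scaleR_sum_right mult.commute)

lemma Gvec_anticomm:
  assumes "clifford_rep \<Gamma>"
  shows "Gvec \<Gamma> v ** Gvec \<Gamma> w + Gvec \<Gamma> w ** Gvec \<Gamma> v = (2 * minner v w) *\<^sub>R mat 1"
proof -
  have "Gvec \<Gamma> w ** Gvec \<Gamma> v = (\<Sum>M\<le>10. \<Sum>N\<le>10. (v M * w N) *\<^sub>R (\<Gamma> N ** \<Gamma> M))"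
    by (subst sum.swap) (simp add: Gvec_mult mult.commute)
  then have "Gvec \<Gamma> v ** Gvec \<Gamma> w + Gvec \<Gamma> w ** Gvec \<Gamma> v
      = (\<Sum>M\<le>10. \<Sum>N\<le>10. (v M * w N) *\<^sub>R (\<Gamma> M ** \<Gamma> N + \<Gamma> N ** \<Gamma> M))"
    by (simp add: Gvec_mult scaleR_right_distrib sum.distrib)
  also have "\<dots> = (\<Sum>M\<le>10. \<Sum>N\<le>10. (v M * w N * (2 * eta M N)) *\<^sub>R mat 1)"
    by (intro sum.cong refl) (simp add: clifford_rep_anticomm[OF assms])
  also have "\<dots> = (\<Sum>M\<le>10. \<Sum>N\<le>10. v M * w N * (2 * eta M N)) *\<^sub>R mat 1"
    by (simp add: scaleR_sum_left)
  also have "(\<Sum>M\<le>10. \<Sum>N\<le>10. v M * w N * (2 * eta M N)) = 2 * minner v w"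
    unfolding minner_def sum_distrib_left
    by (intro sum.cong refl) (simp add: eta_def if_distrib[of "\<lambda>x. _ * (2 * x)"] cong: if_cong)
  finally show ?thesis .
qed

lemma Gvec_square: "clifford_rep \<Gamma> \<Longrightarrow> Gvec \<Gamma> v ** Gvec \<Gamma> v = minner v v *\<^sub>R mat 1"
  using Gvec_anticomm[of \<Gamma> v v] by (simp only: add_self_eq_scaleR_double_iff)

lemma Gvec_basis_vec: "M \<le> 10 \<Longrightarrow> Gvec \<Gamma> (basis_vec M) = \<Gamma> M"
  by (simp add: Gvec_def basis_vec_def if_distrib[of "\<lambda>x. x *\<^sub>R _"] cong: if_cong)

lemma minner_basis_vec: "M \<le> 10 \<Longrightarrow> minner v (basis_vec M) = eta M M * v M"
  by (simp add: minner_def basis_vec_def if_distrib[of "\<lambda>x. _ * x"] cong: if_cong)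

lemma Gvec_anticomm_Gamma:
  assumes "clifford_rep \<Gamma>" "M \<le> 10" "v M = 0"
  shows "Gvec \<Gamma> v ** \<Gamma> M = - (\<Gamma> M ** Gvec \<Gamma> v)"
  using Gvec_anticomm[OF assms(1), of v "basis_vec M"] assms(2,3)
  by (simp add: Gvec_basis_vec minner_basis_vec eq_neg_iff_add_eq_0)

lemma Gvec_anticomm_Gplus:
  assumes "clifford_rep \<Gamma>" "v 0 = 0" "v 9 = 0"
  shows "Gvec \<Gamma> v ** Gplus \<Gamma> = - (Gplus \<Gamma> ** Gvec \<Gamma> v)"
  using Gvec_anticomm_Gamma[of \<Gamma> 0 v] Gvec_anticomm_Gamma[of \<Gamma> 9 v] assms
  by (simp add: Gplus_def matrix_mult.add_left matrix_mult.add_right)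

lemma Gvec_sum: "Gvec \<Gamma> (\<lambda>M. \<Sum>i\<in>I. a i * w i M) = (\<Sum>i\<in>I. a i *\<^sub>R Gvec \<Gamma> (w i))"
  unfolding Gvec_def scaleR_sum_left scaleR_sum_right by (subst sum.swap) simp

lemma subspace_commutant: "subspace {X :: real^'n^'n. A ** X = X ** A}"
  unfolding subspace_def
  by (simp add: matrix_mult.add_left matrix_mult.add_right matrix_mult.scaleR_left
      matrix_mult.scaleR_right)

lemma Gamma_commute_spin8_lie:
  assumes rep: "clifford_rep \<Gamma>" and a: "a = 0 \<or> a = 9" and X: "X \<in> spin8_lie \<Gamma>"
  shows "\<Gamma> a ** X = X ** \<Gamma> a"
proof -
  have "\<Gamma> a ** Sigma \<Gamma> i j = Sigma \<Gamma> i j ** \<Gamma> a" if "1 \<le> i" "i < j" "j \<le> 8" for i j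
  proof -
    have "\<Gamma> a ** (\<Gamma> i ** \<Gamma> j) = - (\<Gamma> i ** \<Gamma> a ** \<Gamma> j)"
      using clifford_rep_anticomm_distinct[OF rep, of a i] a that
      by (auto simp: matrix_mul_assoc matrix_mult.minus_left)
    also have "\<dots> = \<Gamma> i ** \<Gamma> j ** \<Gamma> a"
      using clifford_rep_anticomm_distinct[OF rep, of a j] a that
      by (auto simp: matrix_mul_assoc[symmetric] matrix_mult.minus_right)
    finally show ?thesis
      by (simp add: Sigma_def matrix_mult.scaleR_left matrix_mult.scaleR_right
          matrix_mult.minus_left matrix_mult.minus_right)
  qed
  then have "spin8_lie \<Gamma> \<subseteq> {X. \<Gamma> a ** X = X ** \<Gamma> a}"
    unfolding spin8_lie_def by (intro span_minimal subspace_commutant) blast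
  with X show ?thesis
    by blast
qed

lemma Spin8_subset_centralizer:
  assumes rep: "clifford_rep \<Gamma>"
  shows "Spin8 \<Gamma> \<subseteq> centralizer {Gplus \<Gamma>, Gminus \<Gamma>}"
  unfolding Spin8_def gen_group_def
proof (intro Inter_lower CollectI conjI matgroup_centralizer subsetI)
  fix h assume "h \<in> mexp ` spin8_lie \<Gamma>"
  then obtain X where X: "X \<in> spin8_lie \<Gamma>" and h: "h = mexp X"
    by blast
  have "\<Gamma> a ** h = h ** \<Gamma> a" if "a = 0 \<or> a = 9" for a
    unfolding h by (intro mexp_commute Gamma_commute_spin8_lie[OF rep that X])
  then show "h \<in> centralizer {Gplus \<Gamma>, Gminus \<Gamma>}"
    by (auto simp: centralizer_def h invertible_mexp Gplus_def Gminus_def matrix_mult.add_left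
        matrix_mult.add_right matrix_mult.diff_left matrix_mult.diff_right)
qed

section \<open>Null rotations\<close>

lemma atMost_Int_transverse: "{..10} \<inter> transverse = transverse"
  by (auto simp: transverse_def)

lemma Gvec_transverse:
  "Gvec \<Gamma> (\<lambda>M. if M \<in> transverse then c M else 0) = (\<Sum>\<mu>\<in>transverse. c \<mu> *\<^sub>R \<Gamma> \<mu>)"
proof -
  have "Gvec \<Gamma> (\<lambda>M. if M \<in> transverse then c M else 0)
      = (\<Sum>M\<le>10. if M \<in> transverse then c M *\<^sub>R \<Gamma> M else 0)"
    unfolding Gvec_def by (intro sum.cong) auto
  also have "\<dots> = (\<Sum>\<mu>\<in>transverse. c \<mu> *\<^sub>R \<Gamma> \<mu>)"
    by (simp flip: sum.inter_restrict add: atMost_Int_transverse)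
  finally show ?thesis .
qed

lemma minner_transverse:
  "minner (\<lambda>M. if M \<in> transverse then c M else 0) (\<lambda>M. if M \<in> transverse then c M else 0)
    = (\<Sum>\<mu>\<in>transverse. (c \<mu>)\<^sup>2)"
proof -
  have "minner (\<lambda>M. if M \<in> transverse then c M else 0) (\<lambda>M. if M \<in> transverse then c M else 0)
      = (\<Sum>M\<le>10. if M \<in> transverse then (c M)\<^sup>2 else 0)"
    unfolding minner_def by (intro sum.cong) (auto simp: eta_def transverse_def power2_eq_square)
  also have "\<dots> = (\<Sum>\<mu>\<in>transverse. (c \<mu>)\<^sup>2)"
    by (simp flip: sum.inter_restrict add: atMost_Int_transverse)
  finally show ?thesis .
qed

lemma null_rot_memE:
  assumes "n \<in> null_rot \<Gamma>"
  obtains v where "n = mat 1 - (1/2) *\<^sub>R (Gplus \<Gamma> ** Gvec \<Gamma> v)" "v 0 = 0" "v 9 = 0"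
    "n \<noteq> mat 1 \<Longrightarrow> minner v v > 0"
proof -
  obtain c where n: "n = mat 1 + (\<Sum>\<mu>\<in>transverse. c \<mu> *\<^sub>R Sigma_plus \<Gamma> \<mu>)"
    using assms unfolding null_rot_def by blast
  define v where "v M = (if M \<in> transverse then c M else 0)" for M
  have "n = mat 1 - (1/2) *\<^sub>R (Gplus \<Gamma> ** Gvec \<Gamma> v)"
    unfolding n Sigma_plus_def v_def Gvec_transverse
    by (simp add: matrix_mult.sum_right matrix_mult.scaleR_right scaleR_sum_right sum_negf)
  moreover have "v 0 = 0" "v 9 = 0"
    by (simp_all add: v_def transverse_def)
  moreover have "minner v v > 0" if "n \<noteq> mat 1"
  proof -
    have "\<exists>\<mu>\<in>transverse. c \<mu> \<noteq> 0"
    proof (rule ccontr)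
      assume "\<not> ?thesis"
      then have "(\<Sum>\<mu>\<in>transverse. c \<mu> *\<^sub>R Sigma_plus \<Gamma> \<mu>) = 0"
        by (auto intro!: sum.neutral)
      with \<open>n \<noteq> mat 1\<close> show False
        unfolding n by simp
    qed
    then obtain \<mu> where nonzero: "\<mu> \<in> transverse" "c \<mu> \<noteq> 0" ..
    have "0 < (c \<mu>)\<^sup>2"
      using nonzero(2) by simp
    also have "\<dots> \<le> minner v v"
      unfolding v_def minner_transverse
      by (rule member_le_sum[OF nonzero(1)]) (auto simp: transverse_def)
    finally show ?thesis .
  qed
  ultimately show ?thesis
    using that by blast
qed

lemma null_rot_fixes_mker_Gplus:
  assumes rep: "clifford_rep \<Gamma>" and "n \<in> null_rot \<Gamma>" and e: "e \<in> mker (Gplus \<Gamma>)"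
  shows "n *v e = e"
proof -
  obtain v where n: "n = mat 1 - (1/2) *\<^sub>R (Gplus \<Gamma> ** Gvec \<Gamma> v)" and v: "v 0 = 0" "v 9 = 0"
    using null_rot_memE[OF \<open>n \<in> null_rot \<Gamma>\<close>] by blast
  have "(Gplus \<Gamma> ** Gvec \<Gamma> v) *v e = - (Gvec \<Gamma> v *v (Gplus \<Gamma> *v e))"
    by (simp add: Gvec_anticomm_Gplus[OF rep v] matrix_vector_mul_assoc
        matrix_vector_mult.minus_left)
  with e show ?thesis
    by (simp add: n mker_def matrix_vector_mult.diff_left matrix_vector_mult.scaleR_left)
qed

lemma mker_Gplus_if_null_rot_fixes:
  assumes rep: "clifford_rep \<Gamma>" and "n \<in> null_rot \<Gamma>" "n \<noteq> mat 1" and fixed: "n *v e = e"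
  shows "e \<in> mker (Gplus \<Gamma>)"
proof -
  obtain v where n: "n = mat 1 - (1/2) *\<^sub>R (Gplus \<Gamma> ** Gvec \<Gamma> v)" and v: "v 0 = 0" "v 9 = 0"
    and pos: "minner v v > 0"
    using null_rot_memE[OF \<open>n \<in> null_rot \<Gamma>\<close>] \<open>n \<noteq> mat 1\<close> by metis
  have "Gplus \<Gamma> *v (Gvec \<Gamma> v *v e) = 0"
    using fixed by (simp add: n matrix_vector_mult.diff_left matrix_vector_mult.scaleR_left
        matrix_vector_mul_assoc)
  then have "Gvec \<Gamma> v *v (Gplus \<Gamma> *v e) = 0"
    by (simp add: matrix_vector_mul_assoc Gvec_anticomm_Gplus[OF rep v] matrix_vector_mult.minus_left)
  moreover have "Gvec \<Gamma> v *v (Gvec \<Gamma> v *v (Gplus \<Gamma> *v e)) = minner v v *\<^sub>R (Gplus \<Gamma> *v e)"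
    by (simp add: matrix_vector_mul_assoc[of "Gvec \<Gamma> v" "Gvec \<Gamma> v"] Gvec_square[OF rep]
        matrix_vector_mult.scaleR_left)
  ultimately have "minner v v *\<^sub>R (Gplus \<Gamma> *v e) = 0"
    by simp
  with pos show ?thesis
    by (simp add: mker_def)
qed

lemma invariants_null_rot:
  assumes "clifford_rep \<Gamma>" "N \<subseteq> null_rot \<Gamma>" "\<exists>n\<in>N. n \<noteq> mat 1"
  shows "invariants N = mker (Gplus \<Gamma>)"
  using null_rot_fixes_mker_Gplus mker_Gplus_if_null_rot_fixes assms
  unfolding invariants_def by blast

lemma invariants_gen_group_null_rot:
  assumes "clifford_rep \<Gamma>" "matgroup K" "matgroup N" "N \<subseteq> null_rot \<Gamma>" "\<exists>n\<in>N. n \<noteq> mat 1"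
  shows "invariants (gen_group (K \<union> N)) = invariants K \<inter> mker (Gplus \<Gamma>)"
proof -
  have "\<forall>h\<in>K \<union> N. invertible h"
    using assms(2,3) unfolding matgroup_def by blast
  then show ?thesis
    by (simp add: invariants_gen_group invariants_Un invariants_null_rot[OF assms(1,4,5)])
qed

section \<open>Pairs of anticommuting nilpotents\<close>

locale null_pair =
  fixes P Q :: smat and c :: real and V :: "spinor set"
  assumes P_square: "P ** P = 0" and Q_square: "Q ** Q = 0"
    and anticomm: "P ** Q + Q ** P = c *\<^sub>R mat 1" and c_nonzero: "c \<noteq> 0"
    and subspace_V: "subspace V"
    and P_closed: "x \<in> V \<Longrightarrow> P *v x \<in> V" and Q_closed: "x \<in> V \<Longrightarrow> Q *v x \<in> V"
begin

lemma swap: "null_pair Q P c V"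
  by unfold_locales (use P_square Q_square anticomm c_nonzero subspace_V P_closed Q_closed in
      \<open>simp_all add: add.commute\<close>)

lemma P_square_apply: "P *v (P *v x) = 0"
  by (simp add: matrix_vector_mul_assoc P_square)

lemma decompose: "x = (1/c) *\<^sub>R (P *v (Q *v x)) + (1/c) *\<^sub>R (Q *v (P *v x))"
proof -
  have "P *v (Q *v x) + Q *v (P *v x) = (P ** Q + Q ** P) *v x"
    by (simp add: matrix_vector_mul_assoc matrix_vector_mult_add_rdistrib)
  also have "\<dots> = c *\<^sub>R x"
    by (simp add: anticomm matrix_vector_mult.scaleR_left)
  finally have "P *v (Q *v x) + Q *v (P *v x) = c *\<^sub>R x" .
  with c_nonzero show ?thesis
    by (simp flip: scaleR_right_distrib)
qed

lemma P_right_inverse: "P *v x = 0 \<Longrightarrow> P *v ((1/c) *\<^sub>R (Q *v x)) = x"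
  using decompose[of x] by (simp add: matrix_vector_mult_scaleR)

lemma direct_sum_mker: "direct_sum V (V \<inter> mker P) (V \<inter> mker Q)"
  unfolding direct_sum_def
proof
  show "V = {a + b |a b. a \<in> V \<inter> mker P \<and> b \<in> V \<inter> mker Q}"
  proof (intro equalityI subsetI)
    fix x assume "x \<in> V"
    have "(1/c) *\<^sub>R (P *v (Q *v x)) \<in> V \<inter> mker P" "(1/c) *\<^sub>R (Q *v (P *v x)) \<in> V \<inter> mker Q"
      using P_closed Q_closed \<open>x \<in> V\<close> subspace_mul[OF subspace_V]
      by (simp_all add: mker_def matrix_vector_mult_scaleR P_square_apply null_pair.P_square_apply[OF swap])
    with decompose[of x] show "x \<in> {a + b |a b. a \<in> V \<inter> mker P \<and> b \<in> V \<inter> mker Q}"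
      by blast
  next
    fix x assume "x \<in> {a + b |a b. a \<in> V \<inter> mker P \<and> b \<in> V \<inter> mker Q}"
    then show "x \<in> V"
      using subspace_add[OF subspace_V] by blast
  qed
  show "V \<inter> mker P \<inter> (V \<inter> mker Q) = {0}"
  proof (intro equalityI subsetI)
    fix x assume "x \<in> V \<inter> mker P \<inter> (V \<inter> mker Q)"
    then show "x \<in> {0}"
      using decompose[of x] by (simp add: mker_def)
  qed (simp add: mker_def subspace_0[OF subspace_V])
qed

lemma bij_betw_mker: "bij_betw (\<lambda>\<epsilon>. P *v \<epsilon>) (V \<inter> mker Q) (V \<inter> mker P)"
proof (rule bij_betw_imageI)
  show "inj_on (\<lambda>\<epsilon>. P *v \<epsilon>) (V \<inter> mker Q)"
  proof (rule inj_onI)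
    fix x y assume "x \<in> V \<inter> mker Q" "y \<in> V \<inter> mker Q" and Pxy: "P *v x = P *v y"
    then have "Q *v x = 0" "Q *v y = 0"
      by (simp_all add: mker_def)
    then have "x = Q *v ((1/c) *\<^sub>R (P *v x))" "y = Q *v ((1/c) *\<^sub>R (P *v y))"
      by (simp_all add: null_pair.P_right_inverse[OF swap])
    with Pxy show "x = y"
      by simp
  qed
  show "(\<lambda>\<epsilon>. P *v \<epsilon>) ` (V \<inter> mker Q) = V \<inter> mker P"
  proof (intro equalityI subsetI)
    fix y assume "y \<in> V \<inter> mker P"
    then have "(1/c) *\<^sub>R (Q *v y) \<in> V \<inter> mker Q" "P *v ((1/c) *\<^sub>R (Q *v y)) = y"
      using Q_closed subspace_mul[OF subspace_V] P_right_inverse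
      by (simp_all add: mker_def matrix_vector_mult_scaleR null_pair.P_square_apply[OF swap])
    then show "y \<in> (\<lambda>\<epsilon>. P *v \<epsilon>) ` (V \<inter> mker Q)"
      by (metis image_eqI)
  qed (auto simp: mker_def P_square_apply P_closed)
qed

lemma dim_mker: "2 * dim (V \<inter> mker P) = dim V"
proof -
  have "dim (V \<inter> mker P) \<le> dim (V \<inter> mker Q)"
    using dim_image_le[OF matrix_vector_mul_linear, of P "V \<inter> mker Q"] bij_betw_mker
    by (simp add: bij_betw_def)
  moreover have "dim (V \<inter> mker Q) \<le> dim (V \<inter> mker P)"
    using dim_image_le[OF matrix_vector_mul_linear, of Q "V \<inter> mker P"]
      null_pair.bij_betw_mker[OF swap]
    by (simp add: bij_betw_def)
  moreover have "dim V = dim (V \<inter> mker P) + dim (V \<inter> mker Q)"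
    using dim_sums_Int[of "V \<inter> mker P" "V \<inter> mker Q"] direct_sum_mker
    by (simp add: direct_sum_def subspace_inter subspace_V subspace_mker)
  ultimately show ?thesis
    by simp
qed

lemma bij_betw_mker_eig:
  assumes PR: "P ** R = - (R ** P)" and QR: "Q ** R = - (R ** Q)"
  shows "bij_betw (\<lambda>\<epsilon>. P *v \<epsilon>) (V \<inter> mker Q \<inter> eig R s) (V \<inter> mker P \<inter> eig R (- s))"
proof (rule bij_betw_imageI)
  have RP: "R *v (P *v x) = - (P *v (R *v x))" and RQ: "R *v (Q *v x) = - (Q *v (R *v x))" for x
    by (simp_all add: matrix_vector_mul_assoc PR QR matrix_vector_mult.minus_left)
  show "inj_on (\<lambda>\<epsilon>. P *v \<epsilon>) (V \<inter> mker Q \<inter> eig R s)"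
    using bij_betw_mker by (auto simp: bij_betw_def intro: inj_on_subset)
  show "(\<lambda>\<epsilon>. P *v \<epsilon>) ` (V \<inter> mker Q \<inter> eig R s) = V \<inter> mker P \<inter> eig R (- s)"
  proof (intro equalityI subsetI)
    fix y assume "y \<in> (\<lambda>\<epsilon>. P *v \<epsilon>) ` (V \<inter> mker Q \<inter> eig R s)"
    then obtain x where x: "x \<in> V \<inter> mker Q" "R *v x = s *\<^sub>R x" and y: "y = P *v x"
      by (auto simp: eig_def)
    have "y \<in> V \<inter> mker P"
      using bij_betw_mker x(1) y by (auto simp: bij_betw_def)
    moreover have "R *v y = (- s) *\<^sub>R y"
      by (simp add: y RP x(2) matrix_vector_mult_scaleR)
    ultimately show "y \<in> V \<inter> mker P \<inter> eig R (- s)"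
      by (simp add: eig_def)
  next
    fix y assume y: "y \<in> V \<inter> mker P \<inter> eig R (- s)"
    define x where "x = (1/c) *\<^sub>R (Q *v y)"
    have "x \<in> V \<inter> mker Q"
      using y Q_closed subspace_mul[OF subspace_V]
      by (simp add: x_def mker_def matrix_vector_mult_scaleR null_pair.P_square_apply[OF swap])
    moreover have "R *v x = s *\<^sub>R x"
      using y by (simp add: x_def RQ eig_def matrix_vector_mult_scaleR matrix_vector_mult.minus_right)
    moreover have "P *v x = y"
      using y P_right_inverse by (simp add: x_def mker_def)
    ultimately show "y \<in> (\<lambda>\<epsilon>. P *v \<epsilon>) ` (V \<inter> mker Q \<inter> eig R s)"
      by (force simp: eig_def)
  qed
qed

end

lemma null_pair_Gplus_Gminus_invariants:
  assumes "clifford_rep \<Gamma>" "K \<subseteq> Spin8 \<Gamma>"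
  shows "null_pair (Gplus \<Gamma>) (Gminus \<Gamma>) (-4) (invariants K)"
proof -
  have "K \<subseteq> centralizer {Gplus \<Gamma>, Gminus \<Gamma>}"
    using assms Spin8_subset_centralizer by blast
  then show ?thesis
    by unfold_locales (auto simp: Gplus_square Gminus_square Gplus_Gminus_anticomm assms(1)
        subspace_invariants intro: invariants_closed_centralizer)
qed

section \<open>The Clifford action of a simple multivector\<close>

lemma foldr_matrix_mult_commute_sign:
  fixes u :: "real^'n^'n" and W :: "'a \<Rightarrow> real^'n^'n"
  assumes "\<And>j. j \<in> set xs \<Longrightarrow> u ** W j = s j *\<^sub>R (W j ** u)"
  shows "u ** foldr (\<lambda>j A. W j ** A) xs (mat 1)
    = prod_list (map s xs) *\<^sub>R (foldr (\<lambda>j A. W j ** A) xs (mat 1) ** u)"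
  using assms
proof (induction xs)
  case (Cons j xs)
  let ?F = "foldr (\<lambda>j A. W j ** A) xs (mat 1)"
  have "u ** (W j ** ?F) = s j *\<^sub>R (W j ** (u ** ?F))"
    using Cons.prems[of j] by (simp add: matrix_mul_assoc matrix_mult.scaleR_left)
  also have "\<dots> = (s j * prod_list (map s xs)) *\<^sub>R (W j ** ?F ** u)"
    using Cons by (simp add: matrix_mult.scaleR_right matrix_mul_assoc)
  finally show ?case
    by simp
qed simp

lemma Gvec_anticomm_multivec_action:
  assumes rep: "clifford_rep \<Gamma>" and orth: "\<forall>i<6. \<forall>j<6. i \<noteq> j \<longrightarrow> minner (w i) (w j) = 0"
    and "i < 6"
  shows "Gvec \<Gamma> (w i) ** multivec_action \<Gamma> w = - (multivec_action \<Gamma> w ** Gvec \<Gamma> (w i))"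
proof -
  have "Gvec \<Gamma> (w i) ** Gvec \<Gamma> (w j) = (if j = i then 1 else -1) *\<^sub>R (Gvec \<Gamma> (w j) ** Gvec \<Gamma> (w i))"
    if "j \<in> set [0..<6]" for j
  proof (cases "j = i")
    case False
    with orth \<open>i < 6\<close> that have "minner (w i) (w j) = 0"
      by simp
    with False show ?thesis
      using Gvec_anticomm[OF rep, of "w i" "w j"] by (simp add: eq_neg_iff_add_eq_0)
  qed simp
  then have "Gvec \<Gamma> (w i) ** multivec_action \<Gamma> w
      = prod_list (map (\<lambda>j. if j = i then 1 else -1) [0..<6]) *\<^sub>R (multivec_action \<Gamma> w ** Gvec \<Gamma> (w i))"
    unfolding multivec_action_def by (rule foldr_matrix_mult_commute_sign)
  moreover have "prod_list (map (\<lambda>j. if j = i then 1 else -1) [0..<6]) = (-1 :: real)"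
    using \<open>i < 6\<close> by (simp add: upt_rec less_Suc_eq numeral_eq_Suc) (elim disjE; simp)
  ultimately show ?thesis
    by simp
qed

lemma Gamma_anticomm_multivec_action:
  assumes rep: "clifford_rep \<Gamma>" and orth: "\<forall>i<6. \<forall>j<6. i \<noteq> j \<longrightarrow> minner (w i) (w j) = 0"
    and M: "M \<le> 10" and span: "\<forall>N\<le>10. basis_vec M N = (\<Sum>i<6. a i * w i N)"
  shows "\<Gamma> M ** multivec_action \<Gamma> w = - (multivec_action \<Gamma> w ** \<Gamma> M)"
proof -
  have "\<Gamma> M = Gvec \<Gamma> (\<lambda>N. \<Sum>i<6. a i * w i N)"
    using span by (simp add: Gvec_basis_vec[OF M, symmetric] Gvec_def)
  also have "\<dots> = (\<Sum>i<6. a i *\<^sub>R Gvec \<Gamma> (w i))"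
    by (rule Gvec_sum)
  finally show ?thesis
    using Gvec_anticomm_multivec_action[OF rep orth]
    by (simp add: matrix_mult.sum_left matrix_mult.sum_right matrix_mult.scaleR_left
        matrix_mult.scaleR_right sum_negf)
qed

lemma Gplus_Gminus_anticomm_multivec_action:
  assumes rep: "clifford_rep \<Gamma>" and w: "unit_simple_51_e09 w"
  shows "Gplus \<Gamma> ** multivec_action \<Gamma> w = - (multivec_action \<Gamma> w ** Gplus \<Gamma>)"
    and "Gminus \<Gamma> ** multivec_action \<Gamma> w = - (multivec_action \<Gamma> w ** Gminus \<Gamma>)"
proof -
  have orth: "\<forall>i<6. \<forall>j<6. i \<noteq> j \<longrightarrow> minner (w i) (w j) = 0"
    and span0: "\<exists>a. \<forall>N\<le>10. basis_vec 0 N = (\<Sum>i<6. a i * w i N)"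
    and span9: "\<exists>a. \<forall>N\<le>10. basis_vec 9 N = (\<Sum>i<6. a i * w i N)"
    using w by (simp_all add: unit_simple_51_e09_def)
  have "\<Gamma> 0 ** multivec_action \<Gamma> w = - (multivec_action \<Gamma> w ** \<Gamma> 0)"
    and "\<Gamma> 9 ** multivec_action \<Gamma> w = - (multivec_action \<Gamma> w ** \<Gamma> 9)"
    using Gamma_anticomm_multivec_action[OF rep orth, of 0] Gamma_anticomm_multivec_action[OF rep orth, of 9]
      span0 span9 by auto
  then show "Gplus \<Gamma> ** multivec_action \<Gamma> w = - (multivec_action \<Gamma> w ** Gplus \<Gamma>)"
    and "Gminus \<Gamma> ** multivec_action \<Gamma> w = - (multivec_action \<Gamma> w ** Gminus \<Gamma>)"
    by (simp_all add: Gplus_def Gminus_def matrix_mult.add_left matrix_mult.add_right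
        matrix_mult.diff_left matrix_mult.diff_right)
qed

theorem mainTheorem7:
  fixes \<Gamma> :: "nat \<Rightarrow> real^32^32" and K N :: "(real^32^32) set"
  assumes rep: "clifford_rep \<Gamma>"
    and K: "matgroup K" "K \<subseteq> Spin8 \<Gamma>"
    and N: "matgroup N" "N \<subseteq> null_rot \<Gamma>" "\<exists>n\<in>N. n \<noteq> mat 1"
  defines "G \<equiv> gen_group (K \<union> N)"
    and "DKp \<equiv> invariants K \<inter> mker (Gplus \<Gamma>)"
    and "DKm \<equiv> invariants K \<inter> mker (Gminus \<Gamma>)"
  shows
    "(direct_sum (invariants K) DKp DKm
     \<and> bij_betw (\<lambda>\<epsilon>. Gplus \<Gamma> *v \<epsilon>) DKm DKp
     \<and> bij_betw (\<lambda>\<epsilon>. Gminus \<Gamma> *v \<epsilon>) DKp DKm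
     \<and> 2 * dim DKp = dim (invariants K) \<and> 2 * dim DKm = dim (invariants K)
     \<and> even (dim (invariants K)))
     \<and> (invariants G = DKp \<and> 2 * dim (invariants G) = dim (invariants K))
     \<and> (\<forall>w. unit_simple_51_e09 w \<longrightarrow>
       bij_betw (\<lambda>\<epsilon>. Gplus \<Gamma> *v \<epsilon>) (DKm \<inter> eig (multivec_action \<Gamma> w) 1)
                                    (DKp \<inter> eig (multivec_action \<Gamma> w) (-1))
     \<and> bij_betw (\<lambda>\<epsilon>. Gplus \<Gamma> *v \<epsilon>) (DKm \<inter> eig (multivec_action \<Gamma> w) (-1))
                                    (DKp \<inter> eig (multivec_action \<Gamma> w) 1)
     \<and> 2 * dim (eig (multivec_action \<Gamma> w) 1 \<inter> invariants G) \<le> dim (invariants K))"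
proof -
  interpret pair: null_pair "Gplus \<Gamma>" "Gminus \<Gamma>" "-4" "invariants K"
    using rep K(2) by (rule null_pair_Gplus_Gminus_invariants)
  have invariants_G: "invariants G = DKp"
    unfolding G_def DKp_def using rep K(1) N by (rule invariants_gen_group_null_rot)
  have dim_DKp: "2 * dim DKp = dim (invariants K)"
    unfolding DKp_def by (rule pair.dim_mker)
  have bij_eig: "bij_betw (\<lambda>\<epsilon>. Gplus \<Gamma> *v \<epsilon>) (DKm \<inter> eig (multivec_action \<Gamma> w) s)
      (DKp \<inter> eig (multivec_action \<Gamma> w) (- s))" if "unit_simple_51_e09 w" for w s
    unfolding DKp_def DKm_def
    by (intro pair.bij_betw_mker_eig Gplus_Gminus_anticomm_multivec_action[OF rep that])
  have dim_eig_G: "2 * dim (eig (multivec_action \<Gamma> w) 1 \<inter> invariants G) \<le> dim (invariants K)" for w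
    using dim_subset[of "eig (multivec_action \<Gamma> w) 1 \<inter> invariants G" DKp] dim_DKp invariants_G
    by auto
  have "even (dim (invariants K))" "2 * dim (invariants G) = dim (invariants K)"
    using dim_DKp invariants_G by (metis dvd_triv_left, simp)
  then show ?thesis
    using pair.direct_sum_mker pair.bij_betw_mker null_pair.bij_betw_mker[OF pair.swap]
      null_pair.dim_mker[OF pair.swap] bij_eig[of _ 1] bij_eig[of _ "-1", unfolded minus_minus]
    unfolding DKp_def DKm_def
    by (intro conjI allI impI dim_eig_G invariants_G[unfolded DKp_def] dim_DKp[unfolded DKp_def]) simp_all
qed

end
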